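(* Let $V$ be an $\mathcal{H}$-module vertex algebra and let $W=\bigoplus_{n\in\mathbb{Z}}W_n$ be a lower truncated $(V,\mathcal{H})$-module. If $(\cdot,\cdot)$ is an invariant bilinear form on $W$, then $(W_m,W_n)=0$ for all $m,n\in\mathbb{Z}$ with $m\ne n$.
   Context: Throughout, $\mathbb{F}$ is an algebraically closed field of odd prime characteristic $p$; vertex algebras and modules are over $\mathbb{F}$. Every vertex algebra $V$ is a module for the bialgebra $\mathcal{B}$ with basis $\{\mathcal{D}^{(n)}\}_{n\in\mathbb{N}}$, $\mathcal{D}^{(m)}\mathcal{D}^{(n)}=\binom{m+n}{n}\mathcal{D}^{(m+n)}$, via $\mathcal{D}^{(n)}v=v_{-n-1}\mathbf{1}$. $\mathcal{H}$: let $\mathfrak{sl}_2$ over $\mathbb{C}$ have basis $L_{-1},L_0,L_1$ with $[L_1,L_{-1}]=2L_0$, $[L_0,L_{\pm1}]=\mp L_{\pm1}$; put $L_{\pm1}^{(n)}=L_{\pm1}^n/n!$, $L_0^{(n)}=\binom{-2L_0}{n}$ in $U(\mathfrak{sl}_2)$; $U(\mathfrak{sl}_2)_{\mathbb{Z}}$ is the $\mathbb{Z}$-span of the $L_{-1}^{(i)}L_0^{(j)}L_1^{(k)}$, and $\mathcal{H}=\mathbb{F}\otimes_{\mathbb{Z}}U(\mathfrak{sl}_2)_{\mathbb{Z}}$. $\theta$ is the anti-automorphism of $\mathcal{H}$ with $\theta(L_{\pm1}^{(n)})=L_{\mp1}^{(n)}$, $\theta(L_0^{(n)})=L_0^{(n)}$.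 $e^{zL_{\pm1}}=\sum_{n\ge0}z^nL_{\pm1}^{(n)}$. For $v$ homogeneous of degree $n$, $f(z)^{\deg}v:=f(z)^nv$, extended linearly. A $\mathbb{Z}$-graded vertex algebra: $V=\bigoplus V_n$, $\mathbf{1}\in V_0$, $u_rV_n\subset V_{m+n-r-1}$ for $u\in V_m$. A $\mathbb{Z}$-graded weight $\mathcal{H}$-module: $W=\bigoplus W_n$ with $\mathcal{H}$-action, $L_{\pm1}^{(r)}W_n\subset W_{n\mp r}$, $L_0^{(r)}|_{W_n}=\binom{-2n}{r}$. An $\mathcal{H}$-module vertex algebra: a $\mathbb{Z}$-graded vertex algebra $V$ which is a $\mathbb{Z}$-graded weight $\mathcal{H}$-module with $L_{-1}^{(n)}=\mathcal{D}^{(n)}$, such that $V_n=0$ for $n\ll0$, $L_1^{(n)}\mathbf{1}=\delta_{n,0}\mathbf{1}$, and $e^{zL_1}Y(v,z_0)e^{-zL_1}=Y\bigl(e^{z(1-zz_0)L_1}(1-zz_0)^{-2\deg}v,z_0/(1-zz_0)\bigr)$ for $v\in V$. A $(V,\mathcal{H})$-module: a $\mathbb{Z}$-graded weight $\mathcal{H}$-module $W$ which is a $\mathbb{Z}$-graded $V$-module ($v_mW_n\subset W_{k+n-m-1}$ for $v\in V_k$) satisfying $e^{zL_{-1}}Y_W(v,x)e^{-zL_{-1}}=Y_W(e^{zL_{-1}}v,x)$ and $e^{zL_1}Y_W(v,z_0)e^{-zL_1}=Y_W\bigl(e^{z(1-zz_0)L_1}(1-zz_0)^{-2\deg}v,z_0/(1-zz_0)\bigr)$;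 it is lower truncated if $W_n=0$ for $n\ll0$. A bilinear form on $W$ is invariant if $(Y_W(v,z)w,w')=(w,Y_W(e^{zL_1}(-z^{-2})^{\deg}v,z^{-1})w')$ and $(aw,w')=(w,\theta(a)w')$ for all $v\in V$, $w,w'\in W$, $a\in\mathcal{H}$. *)

theory Defs
  imports Main "HOL-Computational_Algebra.Polynomial"
begin

definition alg_closed_field :: "'a::field itself \<Rightarrow> bool" where
  "alg_closed_field _ \<longleftrightarrow> (\<forall>q :: 'a poly. degree q > 0 \<longrightarrow> (\<exists>x. poly q x = 0))"

text \<open>The formal sums over i >= 0 occurring below are finite because of the
truncation axioms; fsum sums over the (finite) support.\<close>

definition fsum :: "(nat \<Rightarrow> 'b::comm_monoid_add) \<Rightarrow> 'b" where
  "fsum f = (\<Sum>i\<in>{i. f i \<noteq> 0}. f i)"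

definition neg1pow :: "int \<Rightarrow> int" where
  "neg1pow k = (if even k then 1 else -1)"

definition ibinom :: "int \<Rightarrow> nat \<Rightarrow> int" (infix \<open>ibinom\<close> 64) where
  "a ibinom k = (\<Prod>i<k. a - int i) div fact k"

definition is_subspace :: "('a::field \<Rightarrow> 'w::ab_group_add \<Rightarrow> 'w) \<Rightarrow> 'w set \<Rightarrow> bool" where
  "is_subspace sc S \<longleftrightarrow> 0 \<in> S \<and> (\<forall>x\<in>S. \<forall>y\<in>S. x + y \<in> S) \<and> (\<forall>c. \<forall>x\<in>S. sc c x \<in> S)"

definition is_graded :: "('a::field \<Rightarrow> 'w::ab_group_add \<Rightarrow> 'w) \<Rightarrow> (int \<Rightarrow> 'w set) \<Rightarrow> bool" where
  "is_graded sc G \<longleftrightarrow> (\<forall>n. is_subspace sc (G n)) \<and>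
     (\<forall>w. \<exists>!c :: int \<Rightarrow> 'w. finite {n. c n \<noteq> 0} \<and> (\<forall>n. c n \<in> G n) \<and>
            w = (\<Sum>n\<in>{n. c n \<noteq> 0}. c n))"

definition lin_op :: "('a::field \<Rightarrow> 'v::ab_group_add \<Rightarrow> 'v) \<Rightarrow> ('a \<Rightarrow> 'w::ab_group_add \<Rightarrow> 'w)
     \<Rightarrow> ('v \<Rightarrow> 'w) \<Rightarrow> bool" where
  "lin_op sv sw f \<longleftrightarrow> (\<forall>x y. f (x + y) = f x + f y) \<and> (\<forall>c x. f (sv c x) = sw c (f x))"

section \<open>Vertex algebras and modules (u_n v is written Y u n v)\<close>

text \<open>Borcherds (Jacobi) identity, coefficientwise, with integer binomial coefficients.\<close>
definition borcherds :: "('a::field \<Rightarrow> 'w::ab_group_add \<Rightarrow> 'w) \<Rightarrow> ('v \<Rightarrow> int \<Rightarrow> 'v \<Rightarrow> 'v)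
     \<Rightarrow> ('v \<Rightarrow> int \<Rightarrow> 'w \<Rightarrow> 'w) \<Rightarrow> bool" where
  "borcherds sw Y YW \<longleftrightarrow> (\<forall>u v w (l::int) (m::int) (n::int).
     fsum (\<lambda>i. sw (of_int (m ibinom i)) (YW (Y u (l + int i) v) (m + n - int i) w))
     = fsum (\<lambda>i. sw (of_int ((-1)^i * (l ibinom i))) (YW u (m + l - int i) (YW v (n + int i) w)))
       - fsum (\<lambda>i. sw (of_int (neg1pow l * (-1)^i * (l ibinom i)))
                     (YW v (l + n - int i) (YW u (m + int i) w))))"

definition va_module :: "('a::field \<Rightarrow> 'v::ab_group_add \<Rightarrow> 'v) \<Rightarrow> ('v \<Rightarrow> int \<Rightarrow> 'v \<Rightarrow> 'v) \<Rightarrow> 'v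
     \<Rightarrow> ('a \<Rightarrow> 'w::ab_group_add \<Rightarrow> 'w) \<Rightarrow> ('v \<Rightarrow> int \<Rightarrow> 'w \<Rightarrow> 'w) \<Rightarrow> bool" where
  "va_module sv Y one sw YW \<longleftrightarrow>
     vector_space sw \<and>
     (\<forall>n w u u' c. YW (u + u') n w = YW u n w + YW u' n w \<and> YW (sv c u) n w = sw c (YW u n w)) \<and>
     (\<forall>u n. lin_op sw sw (YW u n)) \<and>
     (\<forall>u w. \<exists>N. \<forall>n\<ge>N. YW u n w = 0) \<and>
     (\<forall>n w. YW one n w = (if n = -1 then w else 0)) \<and>
     borcherds sw Y YW"

definition vertex_algebra :: "('a::field \<Rightarrow> 'v::ab_group_add \<Rightarrow> 'v) \<Rightarrow> ('v \<Rightarrow> int \<Rightarrow> 'v \<Rightarrow> 'v) \<Rightarrow> 'v \<Rightarrow> bool" where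
  "vertex_algebra sv Y one \<longleftrightarrow>
     vector_space sv \<and> va_module sv Y one sv Y \<and>
     (\<forall>v n. n \<ge> 0 \<longrightarrow> Y v n one = 0) \<and> (\<forall>v. Y v (-1) one = v)"

definition graded_vertex_algebra :: "('a::field \<Rightarrow> 'v::ab_group_add \<Rightarrow> 'v) \<Rightarrow> ('v \<Rightarrow> int \<Rightarrow> 'v \<Rightarrow> 'v) \<Rightarrow> 'v
     \<Rightarrow> (int \<Rightarrow> 'v set) \<Rightarrow> bool" where
  "graded_vertex_algebra sv Y one GV \<longleftrightarrow>
     vertex_algebra sv Y one \<and> is_graded sv GV \<and> one \<in> GV 0 \<and>
     (\<forall>m n r u v. u \<in> GV m \<longrightarrow> v \<in> GV n \<longrightarrow> Y u r v \<in> GV (m + n - r - 1))"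

text \<open>Lm1 r, L0 r, L1 r are the actions of the divided powers L_{-1}^{(r)}, L_0^{(r)}, L_1^{(r)}
of H = F \<otimes> U(sl_2)_Z. A weight H-module is given by the action of these generators subject to
the defining relations of H on weight modules: divided power relations, the weight relations
(L_0^{(r)} acts on W_n by binomial(-2n,r), L_{\<plusminus>1}^{(r)} W_n \<subseteq> W_{n\<mp>r}) and Kostant's commutation
formula (with e = L_1, f = -L_{-1}, h = -2L_0).\<close>
definition weight_H_module :: "('a::field \<Rightarrow> 'w::ab_group_add \<Rightarrow> 'w) \<Rightarrow> (int \<Rightarrow> 'w set)
     \<Rightarrow> (nat \<Rightarrow> 'w \<Rightarrow> 'w) \<Rightarrow> (nat \<Rightarrow> 'w \<Rightarrow> 'w) \<Rightarrow> (nat \<Rightarrow> 'w \<Rightarrow> 'w) \<Rightarrow> bool" where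
  "weight_H_module sc G Lm1 L0 L1 \<longleftrightarrow>
     vector_space sc \<and> is_graded sc G \<and>
     (\<forall>r. lin_op sc sc (Lm1 r) \<and> lin_op sc sc (L0 r) \<and> lin_op sc sc (L1 r)) \<and>
     (\<forall>w. Lm1 0 w = w \<and> L1 0 w = w) \<and>
     (\<forall>m n w. Lm1 m (Lm1 n w) = sc (of_nat ((m + n) choose n)) (Lm1 (m + n) w)) \<and>
     (\<forall>m n w. L1 m (L1 n w) = sc (of_nat ((m + n) choose n)) (L1 (m + n) w)) \<and>
     (\<forall>n r w. w \<in> G n \<longrightarrow> Lm1 r w \<in> G (n + int r) \<and> L1 r w \<in> G (n - int r) \<and>
        L0 r w = sc (of_int ((- 2 * n) ibinom r)) w) \<and>
     (\<forall>n m k w. w \<in> G n \<longrightarrow>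
        L1 m (Lm1 k w) = (\<Sum>t\<le>min m k.
          sc (of_int ((-1)^t * ((int m - int k - 2 * n) ibinom t))) (Lm1 (k - t) (L1 (m - t) w))))"

definition H_module_VA :: "('a::field \<Rightarrow> 'v::ab_group_add \<Rightarrow> 'v) \<Rightarrow> ('v \<Rightarrow> int \<Rightarrow> 'v \<Rightarrow> 'v) \<Rightarrow> 'v
     \<Rightarrow> (int \<Rightarrow> 'v set) \<Rightarrow> (nat \<Rightarrow> 'v \<Rightarrow> 'v) \<Rightarrow> (nat \<Rightarrow> 'v \<Rightarrow> 'v) \<Rightarrow> (nat \<Rightarrow> 'v \<Rightarrow> 'v) \<Rightarrow> bool" where
  "H_module_VA sv Y one GV VLm1 VL0 VL1 \<longleftrightarrow>
     graded_vertex_algebra sv Y one GV \<and>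
     weight_H_module sv GV VLm1 VL0 VL1 \<and>
     (\<forall>r v. VLm1 r v = Y v (- int r - 1) one) \<and>
     (\<exists>N. \<forall>n<N. GV n = {0}) \<and>
     (\<forall>r. VL1 r one = (if r = 0 then one else 0)) \<and>
     \<comment> \<open>coefficient of z^N z0^(-M-1) in
        e^{zL_1} Y(v,z0) e^{-zL_1} = Y(e^{z(1-z z0)L_1}(1-z z0)^{-2 deg} v, z0/(1-z z0)), v in V_k\<close>
     (\<forall>k v u N M. v \<in> GV k \<longrightarrow>
        (\<Sum>a\<le>N. sv (of_int ((-1)^(N - a))) (VL1 a (Y v M (VL1 (N - a) u))))
        = (\<Sum>i\<le>N. sv (of_int ((-1)^i * ((int N + M + 1 - 2 * k) ibinom i)))
                       (Y (VL1 (N - i) v) (M + int i) u)))"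

definition VH_module :: "('a::field \<Rightarrow> 'v::ab_group_add \<Rightarrow> 'v) \<Rightarrow> ('v \<Rightarrow> int \<Rightarrow> 'v \<Rightarrow> 'v) \<Rightarrow> 'v
     \<Rightarrow> (int \<Rightarrow> 'v set) \<Rightarrow> (nat \<Rightarrow> 'v \<Rightarrow> 'v) \<Rightarrow> (nat \<Rightarrow> 'v \<Rightarrow> 'v)
     \<Rightarrow> ('a \<Rightarrow> 'w::ab_group_add \<Rightarrow> 'w) \<Rightarrow> ('v \<Rightarrow> int \<Rightarrow> 'w \<Rightarrow> 'w) \<Rightarrow> (int \<Rightarrow> 'w set)
     \<Rightarrow> (nat \<Rightarrow> 'w \<Rightarrow> 'w) \<Rightarrow> (nat \<Rightarrow> 'w \<Rightarrow> 'w) \<Rightarrow> (nat \<Rightarrow> 'w \<Rightarrow> 'w) \<Rightarrow> bool" where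
  "VH_module sv Y one GV VLm1 VL1 sw YW GW Lm1 L0 L1 \<longleftrightarrow>
     weight_H_module sw GW Lm1 L0 L1 \<and>
     va_module sv Y one sw YW \<and>
     (\<forall>k n m v w. v \<in> GV k \<longrightarrow> w \<in> GW n \<longrightarrow> YW v m w \<in> GW (k + n - m - 1)) \<and>
     \<comment> \<open>e^{zL_{-1}} Y_W(v,x) e^{-zL_{-1}} = Y_W(e^{zL_{-1}} v, x), coefficient of z^N x^(-M-1)\<close>
     (\<forall>v w N M.
        (\<Sum>a\<le>N. sw (of_int ((-1)^(N - a))) (Lm1 a (YW v M (Lm1 (N - a) w))))
        = YW (VLm1 N v) M w) \<and>
     \<comment> \<open>e^{zL_1} Y_W(v,z0) e^{-zL_1} = Y_W(e^{z(1-z z0)L_1}(1-z z0)^{-2 deg} v, z0/(1-z z0))\<close>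
     (\<forall>k v w N M. v \<in> GV k \<longrightarrow>
        (\<Sum>a\<le>N. sw (of_int ((-1)^(N - a))) (L1 a (YW v M (L1 (N - a) w))))
        = (\<Sum>i\<le>N. sw (of_int ((-1)^i * ((int N + M + 1 - 2 * k) ibinom i)))
                       (YW (VL1 (N - i) v) (M + int i) w)))"

definition lower_truncated :: "('w::zero) itself \<Rightarrow> (int \<Rightarrow> 'w set) \<Rightarrow> bool" where
  "lower_truncated _ GW \<longleftrightarrow> (\<exists>N. \<forall>n<N. GW n = {0})"

definition invariant_form :: "('a::field \<Rightarrow> 'v \<Rightarrow> 'v) \<Rightarrow> (int \<Rightarrow> 'v set) \<Rightarrow> (nat \<Rightarrow> 'v \<Rightarrow> 'v)
     \<Rightarrow> ('a \<Rightarrow> 'w::ab_group_add \<Rightarrow> 'w) \<Rightarrow> ('v \<Rightarrow> int \<Rightarrow> 'w \<Rightarrow> 'w)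
     \<Rightarrow> (nat \<Rightarrow> 'w \<Rightarrow> 'w) \<Rightarrow> (nat \<Rightarrow> 'w \<Rightarrow> 'w) \<Rightarrow> (nat \<Rightarrow> 'w \<Rightarrow> 'w) \<Rightarrow> ('w \<Rightarrow> 'w \<Rightarrow> 'a) \<Rightarrow> bool" where
  "invariant_form sv GV VL1 sw YW Lm1 L0 L1 B \<longleftrightarrow>
     \<comment> \<open>bilinearity\<close>
     (\<forall>x y z. B (x + y) z = B x z + B y z \<and> B z (x + y) = B z x + B z y) \<and>
     (\<forall>c x y. B (sw c x) y = c * B x y \<and> B x (sw c y) = c * B x y) \<and>
     \<comment> \<open>(Y_W(v,z)w,w') = (w, Y_W(e^{zL_1}(-z^{-2})^{deg} v, z^{-1})w'), coefficient of z^(-M-1), v in V_k\<close>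
     (\<forall>k v w w' M. v \<in> GV k \<longrightarrow>
        B (YW v M w) w' = fsum (\<lambda>j. of_int (neg1pow k) * B w (YW (VL1 j v) (2 * k - M - 2 - int j) w'))) \<and>
     \<comment> \<open>(a w, w') = (w, \<theta>(a) w') for the generators of H (hence for all a in H)\<close>
     (\<forall>r w w'. B (Lm1 r w) w' = B w (L1 r w') \<and> B (L1 r w) w' = B w (Lm1 r w') \<and>
        B (L0 r w) w' = B w (L0 r w'))"

end

theory Submission
  imports Defs "HOL-Computational_Algebra.Formal_Power_Series"
begin

text \<open>Since L_0^(r) is self-adjoint for the form and acts on W_n by the scalar binom(-2n, r),
the pairing of W_m with W_n vanishes as soon as binom(-2m, r) and binom(-2n, r) differ in the
ground field for some r. This holds in every characteristic: if all binomial coefficients of a and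
b agreed, then by Vandermonde's identity so would those of a - b and 0, but for a - b > 0 the
coefficient of index a - b is 1 for the first and 0 for the second.\<close>

lemma of_int_ibinom: "(of_int (a ibinom k) :: 'a::field_char_0) = of_int a gchoose k"
  using gbinomial_int_mult_fact[of k a, symmetric] of_int_gbinomial[of a k, where 'a='a]
  by (simp add: ibinom_def atLeast0LessThan)

lemma ibinom_Vandermonde:
  "(a + b) ibinom n = (\<Sum>k\<in>{0..n}. (a ibinom k) * (b ibinom (n - k)))"
proof -
  have "(of_int ((a + b) ibinom n) :: rat) = (of_int a + of_int b) gchoose n"
    by (simp add: of_int_ibinom)
  also have "\<dots> = (\<Sum>k\<in>{0..n}. (of_int a gchoose k) * (of_int b gchoose (n - k)))"
    by (rule gbinomial_Vandermonde[symmetric])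
  also have "\<dots> = of_int (\<Sum>k\<in>{0..n}. (a ibinom k) * (b ibinom (n - k)))"
    by (simp add: of_int_ibinom)
  finally show ?thesis
    by (simp only: of_int_eq_iff)
qed

lemma ibinom_diagonal: "int k ibinom k = 1"
proof -
  have "(of_int (int k ibinom k) :: rat) = of_nat k gchoose k"
    by (simp add: of_int_ibinom)
  also have "\<dots> = 1"
    by (simp only: binomial_gbinomial[symmetric]) simp
  finally show ?thesis
    by simp
qed

lemma zero_ibinom:
  assumes "k > 0"
  shows "0 ibinom k = 0"
proof -
  have "(\<Prod>i<k. 0 - int i) = 0"
    using assms by (intro prod_zero) auto
  then show ?thesis
    unfolding ibinom_def by (simp only:) simp
qed

lemma ibinom_agree_shift:
  assumes "\<forall>r. (of_int (a ibinom r) :: 'a::field) = of_int (b ibinom r)"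
  shows "(of_int ((a + c) ibinom r) :: 'a) = of_int ((b + c) ibinom r)"
  using assms by (simp add: ibinom_Vandermonde)

lemma ibinom_separates:
  assumes "a \<noteq> b"
  shows "\<exists>r. (of_int (a ibinom r) :: 'a::field) \<noteq> of_int (b ibinom r)"
proof -
  have "\<exists>r. (of_int (a ibinom r) :: 'a) \<noteq> of_int (b ibinom r)" if "b < a" for a b :: int
  proof (rule ccontr)
    assume "\<not> ?thesis"
    then have "(of_int ((a - b) ibinom r) :: 'a) = of_int (0 ibinom r)" for r
      using ibinom_agree_shift[of a b "- b" r] by simp
    moreover have "(a - b) ibinom nat (a - b) = 1" "0 ibinom nat (a - b) = 0"
      using that ibinom_diagonal[of "nat (a - b)"] zero_ibinom[of "nat (a - b)"] by simp_all
    ultimately show False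
      by (metis of_int_0 of_int_1 zero_neq_one)
  qed
  then show ?thesis
    using assms by (metis linorder_neq_iff)
qed

lemma invariant_form_weight_spaces_orthogonal:
  assumes "weight_H_module sw GW Lm1 L0 L1"
    and "invariant_form sv GV VL1 sw YW Lm1 L0 L1 B"
    and "m \<noteq> n" "w \<in> GW m" "w' \<in> GW n"
  shows "B w w' = 0"
proof -
  have L0_w: "L0 r w = sw (of_int ((- 2 * m) ibinom r)) w"
    and L0_w': "L0 r w' = sw (of_int ((- 2 * n) ibinom r)) w'" for r
    using assms(1,4,5) unfolding weight_H_module_def by blast+
  have "B (L0 r w) w' = B w (L0 r w')"
    and "B (sw c w) w' = c * B w w'" "B w (sw c w') = c * B w w'" for r c
    using assms(2) unfolding invariant_form_def by blast+
  then have "of_int ((- 2 * m) ibinom r) * B w w' = of_int ((- 2 * n) ibinom r) * B w w'" for r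
    by (simp add: L0_w L0_w')
  moreover obtain r where "(of_int ((- 2 * m) ibinom r) :: 'a) \<noteq> of_int ((- 2 * n) ibinom r)"
    using ibinom_separates[of "- 2 * m" "- 2 * n"] assms(3) by auto
  ultimately show ?thesis
    by (metis mult_cancel_right)
qed

theorem lemma4p3:
  fixes p :: nat
    and sv :: "'a::field \<Rightarrow> 'v::ab_group_add \<Rightarrow> 'v"
    and Y :: "'v \<Rightarrow> int \<Rightarrow> 'v \<Rightarrow> 'v" and one :: 'v and GV :: "int \<Rightarrow> 'v set"
    and VLm1 VL0 VL1 :: "nat \<Rightarrow> 'v \<Rightarrow> 'v"
    and sw :: "'a \<Rightarrow> 'w::ab_group_add \<Rightarrow> 'w"
    and YW :: "'v \<Rightarrow> int \<Rightarrow> 'w \<Rightarrow> 'w" and GW :: "int \<Rightarrow> 'w set"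
    and Lm1 L0 L1 :: "nat \<Rightarrow> 'w \<Rightarrow> 'w"
    and B :: "'w \<Rightarrow> 'w \<Rightarrow> 'a"
  assumes "prime p" and "odd p" and "CHAR('a) = p" and "alg_closed_field TYPE('a)"
    and "H_module_VA sv Y one GV VLm1 VL0 VL1"
    and "VH_module sv Y one GV VLm1 VL1 sw YW GW Lm1 L0 L1"
    and "lower_truncated TYPE('w) GW"
    and "invariant_form sv GV VL1 sw YW Lm1 L0 L1 B"
  shows "\<forall>m n w w'. m \<noteq> n \<longrightarrow> w \<in> GW m \<longrightarrow> w' \<in> GW n \<longrightarrow> B w w' = 0"
proof -
  have "weight_H_module sw GW Lm1 L0 L1"
    using assms(6) unfolding VH_module_def by blast
  then show ?thesis
    using invariant_form_weight_spaces_orthogonal assms(8) by blast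
qed

end
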